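(* For the log-loss $\ell_{\log}(\mathrm{h},(x,y))=-\log\mathrm{h}(y|x)$ (score $L(\mathrm{q},y)=-\log\mathrm{q}(y)$) and $\mathbf{a},\mathbf{b}\in\mathbb{R}^m$, the problem $\mathscr{P}_{\ell_{\log}}^{\mathbf{a},\mathbf{b}}$ is equivalent to $$\mathscr{P}_{\log}^{\mathbf{a},\mathbf{b}}:\ \min_{\boldsymbol{\mu},\boldsymbol{\eta},\nu}\ \tfrac{1}{2}(\mathbf{b}-\mathbf{a})^{\mathrm{T}}\boldsymbol{\eta}-\tfrac{1}{2}(\mathbf{b}+\mathbf{a})^{\mathrm{T}}\boldsymbol{\mu}-\nu\ \text{ s.t. }\sum_{y\in\mathcal{Y}}\exp\{\Phi(x,y)^{\mathrm{T}}\boldsymbol{\mu}+\nu\}\leq 1\ \forall x\in\mathcal{X},\ \boldsymbol{\eta}+\boldsymbol{\mu}\succeq\mathbf{0},\ \boldsymbol{\eta}-\boldsymbol{\mu}\succeq\mathbf{0}.$$ In addition, for a solution $\boldsymbol{\mu}^*,\boldsymbol{\eta}^*,\nu^*$ of $\mathscr{P}_{\log}^{\mathbf{a},\mathbf{b}}$, the condition $\ell_{\log}(\mathrm{h},(x,y))+\Phi(x,y)^{\mathrm{T}}\boldsymbol{\mu}^*+\nu^*\leq 0$ for all $x,y$ (which makes $\mathrm{h}$ a log-MRC for $\mathcal{U}^{\mathbf{a},\mathbf{b}}$) becomes $$\mathrm{h}(y|x)\geq \exp\{\Phi(x,y)^{\mathrm{T}}\boldsymbol{\mu}^*+\nu^*\}\quad\forall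 x\in\mathcal{X},y\in\mathcal{Y}.$$
   Context: Let $\mathcal{X},\mathcal{Y}$ be finite nonempty sets, $\mathcal{Y}=\{1,\dots,|\mathcal{Y}|\}$; $\Delta(\mathcal{Y})$ is the set of probability distributions on $\mathcal{Y}$. A classification rule $\mathrm{h}$ assigns to each $x$ a distribution $\mathrm{h}(\cdot|x)\in\Delta(\mathcal{Y})$. For a score function $L$ with loss $\ell(\mathrm{h},(x,y))=L(\mathrm{h}(\cdot|x),y)$: $\Phi:\mathcal{X}\times\mathcal{Y}\to\mathbb{R}^m$ is a feature mapping, $\boldsymbol{\Phi}(x,\cdot)$ is the $|\mathcal{Y}|\times m$ matrix with rows $\Phi(x,y)^{\mathrm{T}}$, $\mathbf{1}$ the all-ones vector, $\preceq,\succeq$ componentwise, $\mathcal{L}=\{\mathbf{c}\in\mathbb{R}^{|\mathcal{Y}|}:\exists\,\mathrm{q}\in\Delta(\mathcal{Y}),\ \mathbf{c}+(L(\mathrm{q},y))_y\preceq\mathbf{0}\}$, and $\mathscr{P}_{\ell}^{\mathbf{a},\mathbf{b}}$ is $\min_{\boldsymbol{\mu},\boldsymbol{\eta},\nu}\tfrac12(\mathbf{b}-\mathbf{a})^{\mathrm{T}}\boldsymbol{\eta}-\tfrac12(\mathbf{b}+\mathbf{a})^{\mathrm{T}}\boldsymbol{\mu}-\nu$ s.t. $\boldsymbol{\Phi}(x,\cdot)\boldsymbol{\mu}+\nu\mathbf{1}\in\mathcal{L}$ $\forall x$, $\boldsymbol{\eta}\pm\boldsymbol{\mu}\succeq\mathbf{0}$.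 $\mathcal{U}^{\mathbf{a},\mathbf{b}}=\{\mathrm{p}\in\Delta(\mathcal{X}\times\mathcal{Y}):\mathbf{a}\preceq\mathbb{E}_{\mathrm{p}}\{\Phi\}\preceq\mathbf{b}\}$; an $\ell$-MRC for $\mathcal{U}$ minimizes $\max_{\mathrm{p}\in\mathcal{U}}\sum_{x,y}\mathrm{p}(x,y)\ell(\mathrm{h},(x,y))$ over all classification rules. *)

theory Defs
  imports "HOL-Analysis.Analysis" "HOL-Library.Extended_Real"
begin

definition dist_simplex :: "('y::finite \<Rightarrow> real) set" where
  "dist_simplex = {q. (\<forall>y. 0 \<le> q y) \<and> sum q UNIV = 1}"

definition log_score :: "('y::finite \<Rightarrow> real) \<Rightarrow> 'y \<Rightarrow> ereal" where
  "log_score q y = (if 0 < q y then ereal (- ln (q y)) else PInfty)"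

definition Lset :: "(('y::finite \<Rightarrow> real) \<Rightarrow> 'y \<Rightarrow> ereal) \<Rightarrow> ('y \<Rightarrow> real) set" where
  "Lset L = {c. \<exists>q\<in>dist_simplex. \<forall>y. ereal (c y) + L q y \<le> 0}"

definition mrc_obj :: "real^'m \<Rightarrow> real^'m \<Rightarrow> ((real^'m) \<times> (real^'m) \<times> real) \<Rightarrow> real" where
  "mrc_obj a b z = (case z of (\<mu>, \<eta>, \<nu>) \<Rightarrow>
      (1/2) * ((b - a) \<bullet> \<eta>) - (1/2) * ((b + a) \<bullet> \<mu>) - \<nu>)"

definition P_feasible ::
  "(('y::finite \<Rightarrow> real) \<Rightarrow> 'y \<Rightarrow> ereal) \<Rightarrow> ('x::finite \<Rightarrow> 'y \<Rightarrow> real^'m)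
     \<Rightarrow> ((real^'m) \<times> (real^'m) \<times> real) set" where
  "P_feasible L \<Phi> = {(\<mu>, \<eta>, \<nu>).
      (\<forall>x. (\<lambda>y. \<Phi> x y \<bullet> \<mu> + \<nu>) \<in> Lset L) \<and>
      (\<forall>i. 0 \<le> \<eta> $ i + \<mu> $ i \<and> 0 \<le> \<eta> $ i - \<mu> $ i)}"

definition Plog_feasible ::
  "('x::finite \<Rightarrow> 'y::finite \<Rightarrow> real^'m) \<Rightarrow> ((real^'m) \<times> (real^'m) \<times> real) set" where
  "Plog_feasible \<Phi> = {(\<mu>, \<eta>, \<nu>).
      (\<forall>x. (\<Sum>y\<in>UNIV. exp (\<Phi> x y \<bullet> \<mu> + \<nu>)) \<le> 1) \<and>
      (\<forall>i. 0 \<le> \<eta> $ i + \<mu> $ i \<and> 0 \<le> \<eta> $ i - \<mu> $ i)}"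

definition is_min :: "('a \<Rightarrow> real) \<Rightarrow> 'a set \<Rightarrow> 'a \<Rightarrow> bool" where
  "is_min f S z \<longleftrightarrow> z \<in> S \<and> (\<forall>w\<in>S. f z \<le> f w)"

end

theory Submission
  imports Defs
begin

(* For the log score the constraint c + L(q, y) <= 0 says exactly q(y) >= exp c. A distribution
   dominating the nonnegative weights exp c exists iff their total mass is at most 1 (spread the
   slack uniformly), so the set L of the general problem is the exponential-sum constraint of the
   log problem: both problems have the same feasible set, hence the same solutions. *)

lemma log_score_constraint_iff: "ereal c + log_score q y \<le> 0 \<longleftrightarrow> exp c \<le> q y"
proof (cases "0 < q y")
  case True
  have "c - ln (q y) \<le> 0 \<longleftrightarrow> exp c \<le> q y"
    using True by (metis diff_le_0_iff_le exp_le_cancel_iff exp_ln)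
  then show ?thesis using True by (simp add: log_score_def)
next
  case False
  then have "\<not> exp c \<le> q y" by (meson exp_gt_zero less_le_trans)
  then show ?thesis using False by (simp add: log_score_def)
qed

lemma ex_dist_simplex_ge_iff:
  fixes p :: "'y::finite \<Rightarrow> real"
  assumes nonneg: "\<And>y. 0 \<le> p y"
  shows "(\<exists>q\<in>dist_simplex. \<forall>y. p y \<le> q y) \<longleftrightarrow> sum p UNIV \<le> 1"
proof
  assume "\<exists>q\<in>dist_simplex. \<forall>y. p y \<le> q y"
  then obtain q where q: "q \<in> dist_simplex" "\<forall>y. p y \<le> q y" by blast
  have "sum p UNIV \<le> sum q UNIV" using q(2) by (intro sum_mono) auto
  also have "\<dots> = 1" using q(1) by (simp add: dist_simplex_def)
  finally show "sum p UNIV \<le> 1" .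
next
  assume mass: "sum p UNIV \<le> 1"
  define slack where "slack = (1 - sum p UNIV) / real CARD('y)"
  define q where "q y = p y + slack" for y
  have slack_nonneg: "0 \<le> slack" using mass by (simp add: slack_def)
  have "sum q UNIV = sum p UNIV + real CARD('y) * slack"
    by (simp add: q_def sum.distrib)
  also have "\<dots> = 1" by (simp add: slack_def)
  finally have "q \<in> dist_simplex"
    using nonneg slack_nonneg by (simp add: dist_simplex_def q_def)
  moreover have "\<forall>y. p y \<le> q y" using slack_nonneg by (simp add: q_def)
  ultimately show "\<exists>q\<in>dist_simplex. \<forall>y. p y \<le> q y" by blast
qed

lemma Lset_log_score_iff: "c \<in> Lset log_score \<longleftrightarrow> (\<Sum>y\<in>UNIV. exp (c y)) \<le> 1"
  using ex_dist_simplex_ge_iff[of "\<lambda>y. exp (c y)"]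
  by (simp add: Lset_def log_score_constraint_iff)

lemma P_feasible_log_score: "P_feasible log_score \<Phi> = Plog_feasible \<Phi>"
  unfolding P_feasible_def Plog_feasible_def by (simp add: Lset_log_score_iff)

theorem corollary5:
  fixes \<Phi> :: "'x::finite \<Rightarrow> 'y::finite \<Rightarrow> real^'m"
    and a b :: "real^'m"
  shows "P_feasible log_score \<Phi> = Plog_feasible \<Phi>
    \<and> (\<forall>z. is_min (mrc_obj a b) (P_feasible log_score \<Phi>) z
            \<longleftrightarrow> is_min (mrc_obj a b) (Plog_feasible \<Phi>) z)
    \<and> (\<forall>\<mu>s \<eta>s \<nu>s (h :: 'x \<Rightarrow> 'y \<Rightarrow> real).
          is_min (mrc_obj a b) (Plog_feasible \<Phi>) (\<mu>s, \<eta>s, \<nu>s)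
          \<longrightarrow> (\<forall>x. h x \<in> dist_simplex)
          \<longrightarrow> ((\<forall>x y. log_score (h x) y + ereal (\<Phi> x y \<bullet> \<mu>s + \<nu>s) \<le> 0)
               \<longleftrightarrow> (\<forall>x y. exp (\<Phi> x y \<bullet> \<mu>s + \<nu>s) \<le> h x y)))"
proof -
  have "log_score q y + ereal c \<le> 0 \<longleftrightarrow> exp c \<le> q y" for q :: "'y \<Rightarrow> real" and y c
    using log_score_constraint_iff[of c q y] by (simp add: add.commute)
  then show ?thesis by (simp add: P_feasible_log_score)
qed

end
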